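(* Let $G$ be a finite digraph without sources that has a good quasi-kernel. Then $G$ has a quasi-kernel with at most $|V(G)|/2$ vertices.
   Context: Digraphs are finite, without loops and without multiple edges in the same direction; anti-parallel edges are allowed. For $V'\subseteq V(G)$, $\Gamma^+(V')$ is the set of out-neighbours of vertices of $V'$, $\Gamma^+_2(V')=V'\cup\Gamma^+(V')\cup\Gamma^+(\Gamma^+(V'))$. A source is a vertex of in-degree $0$. A quasi-kernel is an independent set $Q$ with $\Gamma^+_2(Q)=V(G)$. A quasi-kernel $Q$ is good if $Q\subseteq\Gamma^+(\Gamma^+(Q))$. *)

theory Defs
  imports Main
begin

definition digraph :: "'a set \<Rightarrow> ('a \<times> 'a) set \<Rightarrow> bool" where
  "digraph V E \<longleftrightarrow> E \<subseteq> V \<times> V \<and> (\<forall>v. (v, v) \<notin> E)"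

definition out_nbrs :: "('a \<times> 'a) set \<Rightarrow> 'a set \<Rightarrow> 'a set" where
  "out_nbrs E S = {w. \<exists>v\<in>S. (v, w) \<in> E}"

definition out_nbrs2 :: "('a \<times> 'a) set \<Rightarrow> 'a set \<Rightarrow> 'a set" where
  "out_nbrs2 E S = S \<union> out_nbrs E S \<union> out_nbrs E (out_nbrs E S)"

definition is_source :: "'a set \<Rightarrow> ('a \<times> 'a) set \<Rightarrow> 'a \<Rightarrow> bool" where
  "is_source V E v \<longleftrightarrow> v \<in> V \<and> (\<forall>u\<in>V. (u, v) \<notin> E)"

definition independent :: "('a \<times> 'a) set \<Rightarrow> 'a set \<Rightarrow> bool" where
  "independent E S \<longleftrightarrow> (\<forall>u\<in>S. \<forall>v\<in>S. (u, v) \<notin> E)"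

definition quasi_kernel :: "'a set \<Rightarrow> ('a \<times> 'a) set \<Rightarrow> 'a set \<Rightarrow> bool" where
  "quasi_kernel V E Q \<longleftrightarrow> Q \<subseteq> V \<and> independent E Q \<and> out_nbrs2 E Q = V"

definition good_quasi_kernel :: "'a set \<Rightarrow> ('a \<times> 'a) set \<Rightarrow> 'a set \<Rightarrow> bool" where
  "good_quasi_kernel V E Q \<longleftrightarrow> quasi_kernel V E Q \<and> Q \<subseteq> out_nbrs E (out_nbrs E Q)"

end

theory Submission
  imports Defs
begin

text \<open>Let \<open>Q\<close> be a good quasi-kernel and \<open>S \<subseteq> Q\<close> minimal with \<open>\<Gamma>\<^sup>+(S) = \<Gamma>\<^sup>+(Q)\<close>.
  Goodness gives \<open>Q \<subseteq> \<Gamma>\<^sup>+(\<Gamma>\<^sup>+(S))\<close>, so \<open>S\<close> is again a quasi-kernel. By minimality every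
  vertex of \<open>S\<close> has a private out-neighbour, so \<open>|S| \<le> |\<Gamma>\<^sup>+(Q)| \<le> |V| - |Q|\<close>, the last step
  because \<open>\<Gamma>\<^sup>+(Q)\<close> misses the independent set \<open>Q\<close>. Hence \<open>Q\<close> or \<open>S\<close> has at most \<open>|V|/2\<close>
  vertices.\<close>

lemma out_nbrs_mono: "A \<subseteq> B \<Longrightarrow> out_nbrs E A \<subseteq> out_nbrs E B"
  unfolding out_nbrs_def by blast

lemma out_nbrs_subset: "digraph V E \<Longrightarrow> out_nbrs E S \<subseteq> V"
  unfolding digraph_def out_nbrs_def by blast

lemma out_nbrs_disjoint_if_independent: "independent E Q \<Longrightarrow> out_nbrs E Q \<inter> Q = {}"
  unfolding independent_def out_nbrs_def by blast

lemma card_le_card_out_nbrs_if_irredundant: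
  assumes "finite (out_nbrs E S)"
    and irredundant: "\<And>q. q \<in> S \<Longrightarrow> out_nbrs E (S - {q}) \<noteq> out_nbrs E S"
  shows "card S \<le> card (out_nbrs E S)"
proof -
  have "\<exists>w. (q, w) \<in> E \<and> w \<notin> out_nbrs E (S - {q})" if "q \<in> S" for q
    using irredundant[OF that] out_nbrs_mono[of "S - {q}" S E] that
    unfolding out_nbrs_def by blast
  then obtain p where p: "\<And>q. q \<in> S \<Longrightarrow> (q, p q) \<in> E \<and> p q \<notin> out_nbrs E (S - {q})"
    by metis
  have "inj_on p S"
  proof (rule inj_onI, rule ccontr)
    fix x y assume "x \<in> S" "y \<in> S" "p x = p y" "x \<noteq> y"
    then have "p x \<in> out_nbrs E (S - {y})"
      using p[of x] unfolding out_nbrs_def by blast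
    with p[of y] \<open>y \<in> S\<close> \<open>p x = p y\<close> show False by simp
  qed
  moreover have "p ` S \<subseteq> out_nbrs E S"
    using p unfolding out_nbrs_def by blast
  ultimately show ?thesis
    using card_inj_on_le assms(1) by blast
qed

lemma exists_irredundant_subset_same_out_nbrs:
  assumes "finite Q"
  obtains S where "S \<subseteq> Q" "out_nbrs E S = out_nbrs E Q"
    "\<And>q. q \<in> S \<Longrightarrow> out_nbrs E (S - {q}) \<noteq> out_nbrs E S"
proof -
  let ?P = "\<lambda>S. S \<subseteq> Q \<and> out_nbrs E S = out_nbrs E Q"
  obtain S where S: "?P S" and min: "\<And>T. ?P T \<Longrightarrow> card S \<le> card T"
    using ex_has_least_nat[of ?P Q card] by blast
  have "out_nbrs E (S - {q}) \<noteq> out_nbrs E S" if "q \<in> S" for q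
  proof
    assume "out_nbrs E (S - {q}) = out_nbrs E S"
    then have "card S \<le> card (S - {q})" using min S by blast
    moreover have "finite S" using S assms finite_subset by blast
    ultimately show False using card_Diff1_less[of S q] that by simp
  qed
  with S show thesis using that by blast
qed

lemma quasi_kernel_if_same_out_nbrs:
  assumes "digraph V E" "good_quasi_kernel V E Q"
    and "S \<subseteq> Q" "out_nbrs E S = out_nbrs E Q"
  shows "quasi_kernel V E S"
proof -
  have "Q \<subseteq> V" "independent E Q" "out_nbrs2 E Q = V"
    and good: "Q \<subseteq> out_nbrs E (out_nbrs E Q)"
    using assms(2) unfolding good_quasi_kernel_def quasi_kernel_def by auto
  then have "out_nbrs2 E S = V"
    using assms(3,4) out_nbrs_subset[OF assms(1)] unfolding out_nbrs2_def by auto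
  moreover have "independent E S"
    using \<open>independent E Q\<close> assms(3) unfolding independent_def by blast
  ultimately show ?thesis
    using assms(3) \<open>Q \<subseteq> V\<close> unfolding quasi_kernel_def by blast
qed

lemma card_out_nbrs_quasi_kernel:
  assumes "finite V" "digraph V E" "quasi_kernel V E Q"
  shows "card (out_nbrs E Q) \<le> card V - card Q"
proof -
  have "Q \<subseteq> V" "out_nbrs E Q \<subseteq> V - Q"
    using assms(3) out_nbrs_subset[OF assms(2)] out_nbrs_disjoint_if_independent[of E Q]
    unfolding quasi_kernel_def by blast+
  then show ?thesis
    using assms(1) card_mono[of "V - Q"] card_Diff_subset[of Q V] finite_subset by fastforce
qed

theorem mainTheorem3:
  fixes V :: "'a set" and E :: "('a \<times> 'a) set"
  assumes "finite V"
    and "digraph V E"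
    and "\<forall>v\<in>V. \<not> is_source V E v"
    and "\<exists>Q. good_quasi_kernel V E Q"
  shows "\<exists>Q. quasi_kernel V E Q \<and> 2 * card Q \<le> card V"
proof -
  obtain Q where good: "good_quasi_kernel V E Q" using assms(4) by blast
  then have qk: "quasi_kernel V E Q" unfolding good_quasi_kernel_def by blast
  then have "finite Q" using assms(1) finite_subset unfolding quasi_kernel_def by blast
  then obtain S where S: "S \<subseteq> Q" "out_nbrs E S = out_nbrs E Q"
    and irredundant: "\<And>q. q \<in> S \<Longrightarrow> out_nbrs E (S - {q}) \<noteq> out_nbrs E S"
    using exists_irredundant_subset_same_out_nbrs by blast
  have "finite (out_nbrs E S)"
    using out_nbrs_subset[OF assms(2)] assms(1) finite_subset by blast
  then have "card S \<le> card V - card Q"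
    using card_le_card_out_nbrs_if_irredundant[OF _ irredundant]
      card_out_nbrs_quasi_kernel[OF assms(1,2) qk] S(2) by simp
  moreover have "quasi_kernel V E S"
    using quasi_kernel_if_same_out_nbrs[OF assms(2) good S] .
  ultimately show ?thesis
    using qk by (cases "2 * card Q \<le> card V") auto
qed

end
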